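(* Let $Q$ be a quandle. (1) If $Q$ is right orderable, then for all $x,y\in Q$ with $S_y(x)\neq x$, the orbit of $x$ under the cyclic group $\langle S_y\rangle$ is infinite. (2) If $Q$ is left orderable, then $Q$ is semi-latin and, for all $x\neq y$ in $Q$, the set $\{L_y^n(x)\}_{n=0,1,\ldots}$ is infinite, where $L_y^0(x)=x$ and $L_y^{i+1}(x)=y*(L_y^i(x))$ for $i\ge 0$.
   Context: A quandle is a non-empty set $Q$ with a binary operation $*$ such that $x*x=x$ for all $x$; for all $x,y$ there is a unique $z$ with $x=z*y$; and $(x*y)*z=(x*z)*(y*z)$ for all $x,y,z$. For $y\in Q$, $S_y:Q\to Q$ is the bijection $S_y(x)=x*y$, and $L_y:Q\to Q$ is the map $L_y(x)=y*x$. $Q$ is right orderable if there is a linear order $<$ on $Q$ such that $x<y$ implies $x*z<y*z$ for all $x,y,z$; left orderable if there is a linear order $<$ such that $x<y$ implies $z*x<z*y$ for all $x,y,z$. $Q$ is semi-latin if each $L_x$ is injective. *)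

theory Defs
  imports Main
begin

text \<open>A quandle structure on the whole type 'a with operation op (x * y = op x y).\<close>
definition quandle :: "('a \<Rightarrow> 'a \<Rightarrow> 'a) \<Rightarrow> bool" where
  "quandle op \<longleftrightarrow>
     (\<forall>x. op x x = x) \<and>
     (\<forall>x y. \<exists>!z. x = op z y) \<and>
     (\<forall>x y z. op (op x y) z = op (op x z) (op y z))"

definition S_map :: "('a \<Rightarrow> 'a \<Rightarrow> 'a) \<Rightarrow> 'a \<Rightarrow> 'a \<Rightarrow> 'a" where
  "S_map op y = (\<lambda>x. op x y)"

definition L_map :: "('a \<Rightarrow> 'a \<Rightarrow> 'a) \<Rightarrow> 'a \<Rightarrow> 'a \<Rightarrow> 'a" where
  "L_map op y = (\<lambda>x. op y x)"

definition int_pow :: "('a \<Rightarrow> 'a) \<Rightarrow> int \<Rightarrow> 'a \<Rightarrow> 'a" where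
  "int_pow f k = (if 0 \<le> k then f ^^ nat k else inv f ^^ nat (- k))"

definition cyc_orbit :: "('a \<Rightarrow> 'a) \<Rightarrow> 'a \<Rightarrow> 'a set" where
  "cyc_orbit f x = {int_pow f k x | k. True}"

definition right_orderable :: "('a \<Rightarrow> 'a \<Rightarrow> 'a) \<Rightarrow> bool" where
  "right_orderable op \<longleftrightarrow> (\<exists>R :: ('a \<times> 'a) set.
     linear_order R \<and> (\<forall>x y z. (x, y) \<in> R - Id \<longrightarrow> (op x z, op y z) \<in> R - Id))"

definition left_orderable :: "('a \<Rightarrow> 'a \<Rightarrow> 'a) \<Rightarrow> bool" where
  "left_orderable op \<longleftrightarrow> (\<exists>R :: ('a \<times> 'a) set.
     linear_order R \<and> (\<forall>x y z. (x, y) \<in> R - Id \<longrightarrow> (op z x, op z y) \<in> R - Id))"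

definition semi_latin :: "('a \<Rightarrow> 'a \<Rightarrow> 'a) \<Rightarrow> bool" where
  "semi_latin op \<longleftrightarrow> (\<forall>x. inj (L_map op x))"

end

theory Submission
  imports Defs
begin

text \<open>An order-preserving self-map of a linearly ordered set that moves a point x moves it
  strictly monotonically: the iterates of x form a strictly increasing or strictly decreasing
  chain, hence are pairwise distinct. Right orderability makes every S_y order-preserving and
  left orderability every L_y; for L_y one only needs y * x \<noteq> x when x \<noteq> y, which is
  right cancellation in the quandle applied to y * x = x = x * x.\<close>

lemma iterates_strict_chain:
  assumes "trans S" and step: "\<And>n. ((f ^^ n) x, (f ^^ Suc n) x) \<in> S" and "m < n"
  shows "((f ^^ m) x, (f ^^ n) x) \<in> S"
  using \<open>m < n\<close> step \<open>trans S\<close> by (induction rule: less_Suc_induct) (auto dest: transD)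

lemma inj_iterates_if_strict_chain:
  assumes "trans S" "irrefl S" and step: "\<And>n. ((f ^^ n) x, (f ^^ Suc n) x) \<in> S"
  shows "inj (\<lambda>n. (f ^^ n) x)"
proof (rule injI)
  fix m n assume "(f ^^ m) x = (f ^^ n) x"
  with iterates_strict_chain[OF \<open>trans S\<close> step] \<open>irrefl S\<close> show "m = n"
    by (metis irrefl_def linorder_neqE_nat)
qed

lemma infinite_iterates_if_increasing_step:
  assumes "trans S" "irrefl S"
    and mono: "\<And>a b. (a, b) \<in> S \<Longrightarrow> (f a, f b) \<in> S"
    and "(x, f x) \<in> S"
  shows "infinite {(f ^^ n) x | n. True}"
proof -
  have "((f ^^ n) x, (f ^^ Suc n) x) \<in> S" for n
  proof (induction n)
    case 0
    show ?case using \<open>(x, f x) \<in> S\<close> by simp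
  next
    case (Suc n)
    show ?case using mono[OF Suc.IH] by simp
  qed
  then have "inj (\<lambda>n. (f ^^ n) x)"
    by (rule inj_iterates_if_strict_chain[OF assms(1,2)])
  then have "infinite (range (\<lambda>n. (f ^^ n) x))"
    using finite_imageD infinite_UNIV_nat by metis
  moreover have "{(f ^^ n) x | n. True} = range (\<lambda>n. (f ^^ n) x)" by blast
  ultimately show ?thesis by simp
qed

lemma infinite_iterates_if_strictly_monotone:
  assumes "strict_linear_order S"
    and mono: "\<And>a b. (a, b) \<in> S \<Longrightarrow> (f a, f b) \<in> S"
    and "f x \<noteq> x"
  shows "infinite {(f ^^ n) x | n. True}"
proof -
  have "trans S" "irrefl S" "total S"
    using assms(1) by (simp_all add: strict_linear_order_on_def)
  then have "trans (S\<inverse>)" "irrefl (S\<inverse>)" by (simp_all add: irrefl_def)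
  from \<open>total S\<close> \<open>f x \<noteq> x\<close> consider "(x, f x) \<in> S" | "(x, f x) \<in> S\<inverse>"
    by (auto simp: total_on_def)
  then show ?thesis
  proof cases
    case 1
    with \<open>trans S\<close> \<open>irrefl S\<close> mono show ?thesis by (rule infinite_iterates_if_increasing_step)
  next
    case 2
    show ?thesis
      by (rule infinite_iterates_if_increasing_step[where f = f, OF \<open>trans (S\<inverse>)\<close> \<open>irrefl (S\<inverse>)\<close> _ 2])
        (simp add: mono)
  qed
qed

lemma inj_if_strictly_monotone:
  assumes "strict_linear_order S" and mono: "\<And>a b. (a, b) \<in> S \<Longrightarrow> (f a, f b) \<in> S"
  shows "inj f"
proof (rule injI)
  fix a b assume "f a = f b"
  have "irrefl S" "total S"
    using assms(1) by (simp_all add: strict_linear_order_on_def)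
  with mono[of a b] mono[of b a] \<open>f a = f b\<close> show "a = b"
    by (auto simp: irrefl_def total_on_def)
qed

lemma iterates_subset_cyc_orbit: "{(f ^^ n) x | n. True} \<subseteq> cyc_orbit f x"
proof clarify
  fix n
  have "(f ^^ n) x = int_pow f (int n) x" by (simp add: int_pow_def)
  then show "(f ^^ n) x \<in> cyc_orbit f x" unfolding cyc_orbit_def by blast
qed

lemma quandle_left_fixed_point:
  assumes "quandle op" and "op y x = x"
  shows "y = x"
proof -
  have "op x x = x" and "\<exists>!z. x = op z x"
    using assms(1) by (simp_all add: quandle_def)
  with \<open>op y x = x\<close> show ?thesis by metis
qed

lemma right_orderableE:
  assumes "right_orderable op"
  obtains S where "strict_linear_order S" and "\<And>a b z. (a, b) \<in> S \<Longrightarrow> (op a z, op b z) \<in> S"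
  using assms unfolding right_orderable_def by (blast dest: strict_linear_order_on_diff_Id)

lemma left_orderableE:
  assumes "left_orderable op"
  obtains S where "strict_linear_order S" and "\<And>a b z. (a, b) \<in> S \<Longrightarrow> (op z a, op z b) \<in> S"
  using assms unfolding left_orderable_def by (blast dest: strict_linear_order_on_diff_Id)

theorem proposition3p7:
  fixes op :: "'a \<Rightarrow> 'a \<Rightarrow> 'a"
  assumes "quandle op"
  shows "(right_orderable op \<longrightarrow>
            (\<forall>x y. S_map op y x \<noteq> x \<longrightarrow> infinite (cyc_orbit (S_map op y) x)))
       \<and> (left_orderable op \<longrightarrow>
            semi_latin op \<and>
            (\<forall>x y. x \<noteq> y \<longrightarrow> infinite {(L_map op y ^^ n) x | n. True}))"
proof (intro conjI impI allI)
  fix x y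
  assume "right_orderable op" and moved: "S_map op y x \<noteq> x"
  from \<open>right_orderable op\<close> obtain S where S: "strict_linear_order S"
    and right_mono: "\<And>a b z. (a, b) \<in> S \<Longrightarrow> (op a z, op b z) \<in> S"
    by (elim right_orderableE) blast
  have "infinite {(S_map op y ^^ n) x | n. True}"
    using S _ moved by (rule infinite_iterates_if_strictly_monotone) (simp add: S_map_def right_mono)
  then show "infinite (cyc_orbit (S_map op y) x)"
    by (rule infinite_super[OF iterates_subset_cyc_orbit])
next
  assume "left_orderable op"
  then obtain S where S: "strict_linear_order S"
    and left_mono: "\<And>a b z. (a, b) \<in> S \<Longrightarrow> (op z a, op z b) \<in> S"
    by (elim left_orderableE) blast
  have L_mono: "(L_map op y a, L_map op y b) \<in> S" if "(a, b) \<in> S" for y a b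
    using left_mono[OF that] by (simp add: L_map_def)
  have "inj (L_map op y)" for y
    by (rule inj_if_strictly_monotone[OF S L_mono])
  then show "semi_latin op"
    unfolding semi_latin_def ..
  fix x y :: 'a
  assume "x \<noteq> y"
  then have moved: "L_map op y x \<noteq> x"
    using quandle_left_fixed_point[OF assms] by (auto simp: L_map_def)
  show "infinite {(L_map op y ^^ n) x | n. True}"
    by (rule infinite_iterates_if_strictly_monotone[where f = "L_map op y", OF S L_mono moved])
qed

end
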